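(* Fix $\sigma>0$, let $\lambda=-\sigma$, and let $q_1,\ldots,q_n\in\Delta^d$ be $n$ i.i.d. samples from the Dirichlet perturbation model $Q=p\oplus D$ described in the context. Consider the fixed-point iteration: given $p(k)\in\Delta^d$, set $\theta(k)=\big(\tfrac{p^0(k)}{\lambda p^1(k)},\ldots,\tfrac{p^0(k)}{\lambda p^d(k)}\big)$, $y_i=F(q_i)=\big(\tfrac{q_i^1}{q_i^0},\ldots,\tfrac{q_i^d}{q_i^0}\big)$, $$\eta(k+1)=\sum_{i=1}^n w_i(\theta(k))\,y_i,\qquad w_i(\theta)=\frac{1/(1+\lambda\,\theta\cdot y_i)}{\sum_{j=1}^n 1/(1+\lambda\,\theta\cdot y_j)},$$ and let $p(k+1)=\Big(\frac{1}{1+\sum_{j=1}^d\eta^j(k+1)},\frac{\eta^1(k+1)}{1+\sum_{j=1}^d\eta^j(k+1)},\ldots,\frac{\eta^d(k+1)}{1+\sum_{j=1}^d\eta^j(k+1)}\Big)$. Then $$p(k+1)=p(k)\oplus\Big(\frac1n\sum_{i=1}^n (q_i\ominus p(k))\Big),$$ where $\frac1n\sum_{i=1}^n$ denotes the ordinary Euclidean average in $\mathbb{R}^{d+1}$. In particular, the update does not depend on $\lambda$ (equivalently on $\sigma$).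
   Context: $\Delta^d=\{p=(p^0,\ldots,p^d)\in(0,1)^{d+1}:p^0+\cdots+p^d=1\}$ is the open unit simplex (superscripts denote components). Perturbation: $p\oplus q:=\big(\frac{p^jq^j}{\sum_{l=0}^d p^lq^l}\big)_{j=0}^d$; difference: $p\ominus q:=\big(\frac{p^j/q^j}{\sum_{l=0}^d p^l/q^l}\big)_{j=0}^d$. Dirichlet perturbation model: for $p\in\Delta^d$ (the parameter) and $D=(D^0,\ldots,D^d)$ a Dirichlet random vector with all parameters equal to $\frac{1}{\sigma(1+d)}$, the observation is $Q=p\oplus D\in\Delta^d$. This model is a $\lambda$-exponential family $(1+\lambda\theta\cdot F(q))_+^{1/\lambda}e^{-\varphi(\theta)}$ with $\lambda=-\sigma$, natural parameter $\theta=\big(\frac{p^0}{\lambda p^1},\ldots,\frac{p^0}{\lambda p^d}\big)\in(-\infty,0)^d$, statistic $F(q)=\big(\frac{q^1}{q^0},\ldots,\frac{q^d}{q^0}\big)$, and dual parameter $\eta=\big(\frac{p^1}{p^0},\ldots,\frac{p^d}{p^0}\big)=\frac1\lambda\big(\frac1{\theta^1},\ldots,\frac1{\theta^d}\big)\in(0,\infty)^d$; the iteration in the claim is the general fixed-point iteration $\eta(k+1)=\sum_i w_i(\theta(k))y_i$, $\theta(k+1)=\frac1\lambda(1/\eta^1(k+1),\ldots,1/\eta^d(k+1))$ written in terms of the simplex parameter $p$. *)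

theory Defs
  imports Complex_Main
begin

text \<open>Points of R^(d+1) are functions nat => real; only components 0..d matter.\<close>

definition simplex :: "nat \<Rightarrow> (nat \<Rightarrow> real) \<Rightarrow> bool" where
  "simplex d p \<longleftrightarrow> (\<forall>j\<le>d. 0 < p j \<and> p j < 1) \<and> (\<Sum>j\<le>d. p j) = 1"

definition perturb :: "nat \<Rightarrow> (nat \<Rightarrow> real) \<Rightarrow> (nat \<Rightarrow> real) \<Rightarrow> (nat \<Rightarrow> real)" where
  "perturb d p q = (\<lambda>j. p j * q j / (\<Sum>l\<le>d. p l * q l))"

definition difference :: "nat \<Rightarrow> (nat \<Rightarrow> real) \<Rightarrow> (nat \<Rightarrow> real) \<Rightarrow> (nat \<Rightarrow> real)" where
  "difference d p q = (\<lambda>j. (p j / q j) / (\<Sum>l\<le>d. p l / q l))"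

definition nat_param :: "real \<Rightarrow> (nat \<Rightarrow> real) \<Rightarrow> (nat \<Rightarrow> real)" where
  "nat_param lam p = (\<lambda>j. p 0 / (lam * p j))"

definition stat_F :: "(nat \<Rightarrow> real) \<Rightarrow> (nat \<Rightarrow> real)" where
  "stat_F q = (\<lambda>j. q j / q 0)"

definition dotd :: "nat \<Rightarrow> (nat \<Rightarrow> real) \<Rightarrow> (nat \<Rightarrow> real) \<Rightarrow> real" where
  "dotd d x y = (\<Sum>j=1..d. x j * y j)"

definition weight :: "real \<Rightarrow> nat \<Rightarrow> nat \<Rightarrow> (nat \<Rightarrow> nat \<Rightarrow> real) \<Rightarrow> (nat \<Rightarrow> real) \<Rightarrow> nat \<Rightarrow> real" where
  "weight lam d n y \<theta> i =
     (1 / (1 + lam * dotd d \<theta> (y i))) / (\<Sum>j=1..n. 1 / (1 + lam * dotd d \<theta> (y j)))"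

definition eta_next :: "real \<Rightarrow> nat \<Rightarrow> nat \<Rightarrow> (nat \<Rightarrow> nat \<Rightarrow> real) \<Rightarrow> (nat \<Rightarrow> real) \<Rightarrow> (nat \<Rightarrow> real)" where
  "eta_next lam d n q p =
     (let y = (\<lambda>i. stat_F (q i)); \<theta> = nat_param lam p
      in (\<lambda>j. \<Sum>i=1..n. weight lam d n y \<theta> i * y i j))"

definition eta_to_p :: "nat \<Rightarrow> (nat \<Rightarrow> real) \<Rightarrow> (nat \<Rightarrow> real)" where
  "eta_to_p d \<eta> = (\<lambda>j. if j = 0 then 1 / (1 + (\<Sum>l=1..d. \<eta> l))
                        else \<eta> j / (1 + (\<Sum>l=1..d. \<eta> l)))"

definition fp_step :: "real \<Rightarrow> nat \<Rightarrow> nat \<Rightarrow> (nat \<Rightarrow> nat \<Rightarrow> real) \<Rightarrow> (nat \<Rightarrow> real) \<Rightarrow> (nat \<Rightarrow> real)" where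
  "fp_step lam d n q p = eta_to_p d (eta_next lam d n q p)"

end

theory Submission
  imports Defs
begin

text \<open>The factor \<open>1/\<lambda>\<close> in \<open>\<theta>\<close> cancels the \<open>\<lambda>\<close> in front of it, so the
  denominator \<open>1 + \<lambda> \<theta>\<cdot>y\<^sub>i\<close> equals \<open>(p\<^sup>0/q\<^sub>i\<^sup>0) \<Sum>\<^sub>l q\<^sub>i\<^sup>l/p\<^sup>l\<close>, so its reciprocal is exactly
  the \<open>0\<close>-th component of \<open>q\<^sub>i \<ominus> p\<close>. Multiplying by \<open>y\<^sub>i\<^sup>j = q\<^sub>i\<^sup>j/q\<^sub>i\<^sup>0\<close> gives \<open>(p\<^sup>j/p\<^sup>0)\<close> times
  the \<open>j\<close>-th component, so with \<open>M = \<Sum>\<^sub>i q\<^sub>i \<ominus> p\<close> the new dual parameter is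
  \<open>\<eta>\<^sup>j = p\<^sup>j M\<^sup>j / (p\<^sup>0 M\<^sup>0)\<close>. Mapping back to the simplex normalises \<open>(p\<^sup>l M\<^sup>l)\<^sub>l\<close>, which is
  \<open>p \<oplus> M\<close>, and \<open>\<oplus>\<close> ignores the scalar factor \<open>1/n\<close>.\<close>

lemma sum_atMost_split_first:
  "(\<Sum>l\<le>d. f l) = f 0 + (\<Sum>l=1..d. f l)" for f :: "nat \<Rightarrow> 'a::comm_monoid_add"
  by (simp add: atMost_atLeast0 sum.atLeast_Suc_atMost)

lemma perturb_scale_right:
  assumes "c \<noteq> 0"
  shows "perturb d p (\<lambda>l. c * m l) = perturb d p m"
proof -
  have "(\<Sum>l\<le>d. p l * (c * m l)) = c * (\<Sum>l\<le>d. p l * m l)"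
    by (simp add: sum_distrib_left ac_simps)
  then show ?thesis
    using assms by (simp add: perturb_def ac_simps)
qed

lemma eta_to_p_of_ratios:
  assumes "x 0 \<noteq> 0" and "\<forall>l\<in>{1..d}. \<eta> l = x l / x 0" and "j \<le> d"
  shows "eta_to_p d \<eta> j = x j / (\<Sum>l\<le>d. x l)"
proof -
  have "1 + (\<Sum>l=1..d. \<eta> l) = (\<Sum>l\<le>d. x l) / x 0"
    using assms(1,2) by (simp add: sum_atMost_split_first sum_divide_distrib add_divide_distrib)
  then show ?thesis
    using assms by (auto simp: eta_to_p_def)
qed

lemma one_plus_dot_nat_param_stat_F:
  assumes "lam \<noteq> 0" and "p 0 \<noteq> 0" and "q 0 \<noteq> 0"
  shows "1 + lam * dotd d (nat_param lam p) (stat_F q) = p 0 / q 0 * (\<Sum>l\<le>d. q l / p l)"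
proof -
  have "lam * dotd d (nat_param lam p) (stat_F q) = p 0 / q 0 * (\<Sum>l=1..d. q l / p l)"
    using assms(1) by (simp add: dotd_def nat_param_def stat_F_def sum_distrib_left ac_simps)
  then show ?thesis
    using assms(2,3) by (simp add: sum_atMost_split_first distrib_left)
qed

lemma inverse_one_plus_dot_eq_difference:
  assumes "lam \<noteq> 0" and "p 0 \<noteq> 0" and "q 0 \<noteq> 0"
  shows "1 / (1 + lam * dotd d (nat_param lam p) (stat_F q)) = difference d q p 0"
  using assms by (simp add: one_plus_dot_nat_param_stat_F difference_def)

lemma difference_0_mult_stat_F:
  assumes "p j \<noteq> 0" and "q 0 \<noteq> 0"
  shows "difference d q p 0 * stat_F q j = p j / p 0 * difference d q p j"
  using assms by (simp add: difference_def stat_F_def)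

lemma difference_pos:
  assumes "\<forall>l\<le>d. 0 < q l" and "\<forall>l\<le>d. 0 < p l" and "j \<le> d"
  shows "0 < difference d q p j"
proof -
  have "0 < (\<Sum>l\<le>d. q l / p l)"
    using assms(1,2) by (intro sum_pos) auto
  then show ?thesis
    using assms by (simp add: difference_def)
qed

lemma eta_next_eq_difference_sums:
  assumes "lam \<noteq> 0" and "p 0 \<noteq> 0" and "p j \<noteq> 0" and "\<forall>i\<in>{1..n}. q i 0 \<noteq> 0"
  shows "eta_next lam d n q p j
    = p j * (\<Sum>i=1..n. difference d (q i) p j) / (p 0 * (\<Sum>i=1..n. difference d (q i) p 0))"
proof -
  let ?M = "\<lambda>l. \<Sum>i=1..n. difference d (q i) p l"
  have inv: "1 / (1 + lam * dotd d (nat_param lam p) (stat_F (q i))) = difference d (q i) p 0"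
    if "i \<in> {1..n}" for i
    using assms that by (simp add: inverse_one_plus_dot_eq_difference)
  have normalizer: "(\<Sum>k=1..n. 1 / (1 + lam * dotd d (nat_param lam p) (stat_F (q k)))) = ?M 0"
    by (rule sum.cong) (simp_all add: inv)
  have weight_eq: "weight lam d n (\<lambda>i. stat_F (q i)) (nat_param lam p) i = difference d (q i) p 0 / ?M 0"
    if "i \<in> {1..n}" for i
    unfolding weight_def normalizer inv[OF that] ..
  have "eta_next lam d n q p j = (\<Sum>i=1..n. difference d (q i) p 0 * stat_F (q i) j) / ?M 0"
    unfolding eta_next_def Let_def sum_divide_distrib by (rule sum.cong) (simp_all add: weight_eq)
  also have "\<dots> = (\<Sum>i=1..n. p j / p 0 * difference d (q i) p j) / ?M 0"
    using assms by (simp add: difference_0_mult_stat_F)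
  also have "\<dots> = p j * ?M j / (p 0 * ?M 0)"
    by (simp add: sum_distrib_left[symmetric] sum_divide_distrib[symmetric])
  finally show ?thesis .
qed

theorem proposition2:
  fixes \<sigma> :: real and d n :: nat
    and q :: "nat \<Rightarrow> nat \<Rightarrow> real" and p :: "nat \<Rightarrow> real"
  assumes "\<sigma> > 0" and "n \<ge> 1"
    and "\<forall>i\<in>{1..n}. simplex d (q i)"
    and "simplex d p"
  shows "\<forall>j\<le>d. fp_step (- \<sigma>) d n q p j
           = perturb d p (\<lambda>l. (1 / real n) * (\<Sum>i=1..n. difference d (q i) p l)) j"
proof -
  have p_pos: "\<forall>l\<le>d. 0 < p l" and q_pos: "\<And>i. i \<in> {1..n} \<Longrightarrow> \<forall>l\<le>d. 0 < q i l"
    using assms(3,4) by (auto simp: simplex_def)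
  define M where "M l = (\<Sum>i=1..n. difference d (q i) p l)" for l
  have M_pos: "0 < M l" if "l \<le> d" for l
    unfolding M_def using assms(2) p_pos q_pos that by (intro sum_pos difference_pos) auto
  have q0_nonzero: "\<forall>i\<in>{1..n}. q i 0 \<noteq> 0"
    using q_pos by fastforce
  have "\<forall>l\<in>{1..d}. eta_next (- \<sigma>) d n q p l = p l * M l / (p 0 * M 0)"
    unfolding M_def using assms(1) p_pos q0_nonzero by (intro ballI eta_next_eq_difference_sums) auto
  then have "fp_step (- \<sigma>) d n q p j = p j * M j / (\<Sum>l\<le>d. p l * M l)" if "j \<le> d" for j
    unfolding fp_step_def using p_pos M_pos[of 0] that
    by (intro eta_to_p_of_ratios[where x = "\<lambda>l. p l * M l"]) auto
  moreover have "perturb d p (\<lambda>l. 1 / real n * M l) = perturb d p M"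
    using assms(2) by (intro perturb_scale_right) simp
  ultimately show ?thesis
    unfolding M_def[symmetric] by (simp add: perturb_def)
qed

end
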